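(* Let $P$ be a right LCM monoid and let $T:P\to\mathcal{B}(\mathcal{H})$ be a contractive representation satisfying the following condition: for every finite subset $F\subset P$, \[Z(F)=\sum_{U\subseteq F}(-1)^{|U|}T_{\vee U}T_{\vee U}^*\geq 0 .\] Let $F\subset P$ be a finite set and let $c_F=\max\{|U| : U\subset F,\ \vee U\neq\infty\}$. Then for every $h\in\mathcal{H}$, \[\sum_{p\in F}\|T_p^*h\|^2\leq c_F\|h\|^2.\]
   Context: A monoid $P$ is right LCM if for all $p,q\in P$, either $pP\cap qP=\emptyset$ or $pP\cap qP=rP$ for some $r\in P$. For finite $U\subset P$, write $\vee U=\infty$ if $\bigcap_{p\in U}pP=\emptyset$, and otherwise $\vee U=r$ for some $r$ with $\bigcap_{p\in U}pP=rP$; by convention $\vee\emptyset$ is the identity $e$ of $P$. A contractive representation is a unital monoid homomorphism $p\mapsto T_p$ into the contractions on a Hilbert space $\mathcal{H}$ (so $T_e=I$), and $T_{\vee U}:=0$ when $\vee U=\infty$. Here $|U|$ denotes the cardinality of $U$. *)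

theory Defs
  imports "HOL-Analysis.Analysis"
begin

definition rideal :: "'p::monoid_mult \<Rightarrow> 'p set" where
  "rideal p = range (\<lambda>x. p * x)"

definition right_LCM :: "'p::monoid_mult itself \<Rightarrow> bool" where
  "right_LCM _ \<longleftrightarrow> (\<forall>p q::'p. rideal p \<inter> rideal q = {} \<or> (\<exists>r. rideal p \<inter> rideal q = rideal r))"

text \<open>A choice of joins: J U = None encodes \<open>\<or>U = \<infinity>\<close>, J U = Some r encodes \<open>\<or>U = r\<close>;
  by convention J {} = Some 1.\<close>
definition join_choice :: "('p::monoid_mult set \<Rightarrow> 'p option) \<Rightarrow> bool" where
  "join_choice J \<longleftrightarrow> J {} = Some 1 \<and>
     (\<forall>U. finite U \<and> U \<noteq> {} \<longrightarrow>
        (case J U of None \<Rightarrow> (\<Inter>p\<in>U. rideal p) = {}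
                   | Some r \<Rightarrow> (\<Inter>p\<in>U. rideal p) = rideal r))"

definition contractive_rep :: "('p::monoid_mult \<Rightarrow> ('h::real_normed_vector \<Rightarrow>\<^sub>L 'h)) \<Rightarrow> bool" where
  "contractive_rep T \<longleftrightarrow> T 1 = id_blinfun \<and> (\<forall>p q. T (p * q) = T p o\<^sub>L T q) \<and> (\<forall>p. norm (T p) \<le> 1)"

definition adjoint_family :: "('p \<Rightarrow> ('h::real_inner \<Rightarrow>\<^sub>L 'h)) \<Rightarrow> ('p \<Rightarrow> ('h \<Rightarrow>\<^sub>L 'h)) \<Rightarrow> bool" where
  "adjoint_family T Ta \<longleftrightarrow> (\<forall>p x y. inner (T p x) y = inner x (Ta p y))"

definition Tjoin :: "('p set \<Rightarrow> 'p option) \<Rightarrow> ('p \<Rightarrow> ('h::real_normed_vector \<Rightarrow>\<^sub>L 'h)) \<Rightarrow> 'p set \<Rightarrow> ('h \<Rightarrow>\<^sub>L 'h)" where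
  "Tjoin J T U = (case J U of None \<Rightarrow> 0 | Some r \<Rightarrow> T r)"

definition Zop :: "('p set \<Rightarrow> 'p option) \<Rightarrow> ('p \<Rightarrow> ('h::real_normed_vector \<Rightarrow>\<^sub>L 'h)) \<Rightarrow> ('p \<Rightarrow> ('h \<Rightarrow>\<^sub>L 'h)) \<Rightarrow> 'p set \<Rightarrow> 'h \<Rightarrow> 'h" where
  "Zop J T Ta F h = (\<Sum>U\<in>Pow F. ((-1::real) ^ card U) *\<^sub>R (Tjoin J T U (Tjoin J Ta U h)))"

definition positive_op :: "('h::real_inner \<Rightarrow> 'h) \<Rightarrow> bool" where
  "positive_op A \<longleftrightarrow> (\<forall>h. inner (A h) h \<ge> 0)"

definition cF :: "('p set \<Rightarrow> 'p option) \<Rightarrow> 'p set \<Rightarrow> nat" where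
  "cF J F = Max {card U | U. U \<subseteq> F \<and> J U \<noteq> None}"

end

theory Submission
  imports Defs
begin

(*
  Write A U = |T*_{vU} h|^2 and let C_k be the set of k-element subsets of F.  The join vU
  depends only on the ideal of common right multiples of U, so the alternating sum
  S_k = (sum over V <= C_k of (-1)^|V| A (Union V)) equals <Z(G) h, h> for the finite set G of
  finite joins of members of C_k (subfamilies with the same set of joins cancel out); hence
  S_k >= 0.  On the other hand A vanishes on subsets of F with more than c_F elements, and
  Moebius inversion over the subsets of F turns S_1 + ... + S_{c_F} into
  c_F A {} - (sum over p in F of A {p}) = c_F |h|^2 - (sum over p in F of |T_p* h|^2).
*)

definition alternating_sum :: "('a set \<Rightarrow> real) \<Rightarrow> 'a set \<Rightarrow> real" where
  "alternating_sum f X = (\<Sum>S\<in>Pow X. (-1) ^ card S * f S)"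

lemma sum_Pow_insert:
  assumes "finite X" "a \<notin> X"
  shows "(\<Sum>S\<in>Pow (insert a X). f S) = (\<Sum>S\<in>Pow X. f S) + (\<Sum>S\<in>Pow X. f (insert a S))"
proof -
  have "inj_on (insert a) (Pow X)"
    using assms(2) by (intro inj_onI) (metis PowD Diff_insert_absorb subsetD)
  moreover have "Pow X \<inter> insert a ` Pow X = {}"
    using assms(2) by blast
  ultimately show ?thesis
    unfolding Pow_insert using assms(1) by (simp add: sum.union_disjoint sum.reindex)
qed

lemma alternating_sum_insert:
  assumes "finite X" "a \<notin> X"
  shows "alternating_sum f (insert a X) = alternating_sum f X - alternating_sum (\<lambda>S. f (insert a S)) X"
proof -
  have "card (insert a S) = Suc (card S)" if "S \<in> Pow X" for S
    using that assms by (meson PowD card_insert_disjoint finite_subset subsetD)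
  then show ?thesis
    unfolding alternating_sum_def sum_Pow_insert[OF assms] by (simp add: sum_negf)
qed

lemma alternating_sum_insert_member:
  assumes "finite X" "a \<in> X"
  shows "alternating_sum (\<lambda>S. f (insert a S)) X = 0"
proof -
  obtain Y where "X = insert a Y" "a \<notin> Y" "finite Y"
    using assms by (metis Set.set_insert finite_insert)
  then show ?thesis by (simp add: alternating_sum_insert)
qed

lemma alternating_sum_const:
  assumes "finite X"
  shows "alternating_sum (\<lambda>_. c) X = (if X = {} then c else 0)"
proof (cases "X = {}")
  case False
  then obtain a where "a \<in> X" by blast
  then show ?thesis
    using alternating_sum_insert_member[OF assms, of a "\<lambda>_. c"] False by simp
qed (simp add: alternating_sum_def)

lemma alternating_sum_image:
  assumes "finite X"
  shows "alternating_sum (\<lambda>S. g (\<phi> ` S)) X = alternating_sum g (\<phi> ` X)"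
  using assms
proof (induction X arbitrary: g rule: finite_induct)
  case empty
  show ?case by (simp add: alternating_sum_def)
next
  case (insert x X)
  have "alternating_sum (\<lambda>S. g (\<phi> ` S)) (insert x X)
      = alternating_sum g (\<phi> ` X) - alternating_sum (\<lambda>T. g (insert (\<phi> x) T)) (\<phi> ` X)"
    using insert.IH[of g] insert.IH[of "\<lambda>T. g (insert (\<phi> x) T)"]
    by (simp add: alternating_sum_insert insert.hyps)
  also have "\<dots> = alternating_sum g (\<phi> ` insert x X)"
    using insert.hyps
    by (cases "\<phi> x \<in> \<phi> ` X") (simp_all add: alternating_sum_insert alternating_sum_insert_member insert_absorb)
  finally show ?case .
qed

lemma alternating_sum_restrict:
  assumes "finite X" "\<And>S. S \<subseteq> X \<Longrightarrow> \<not> S \<subseteq> Y \<Longrightarrow> f S = 0"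
  shows "alternating_sum f X = alternating_sum f (X \<inter> Y)"
  unfolding alternating_sum_def using assms by (intro sum.mono_neutral_right) auto

lemma finite_subset_interval:
  "finite F \<Longrightarrow> finite {W. U \<subseteq> W \<and> W \<subseteq> F}"
  by (simp add: finite_subset[of _ "Pow F"] subset_iff)

lemma sum_alternating_supersets:
  assumes "finite V" "U \<subseteq> V"
  shows "(\<Sum>W | U \<subseteq> W \<and> W \<subseteq> V. (-1::real) ^ card W) = (if U = V then (-1) ^ card U else 0)"
proof (cases "U = V")
  case True
  then have "{W. U \<subseteq> W \<and> W \<subseteq> V} = {U}" by auto
  then show ?thesis using True by simp
next
  case False
  then have "U \<subset> V" using assms by auto
  with assms(1) have "(\<Sum>W | U \<subseteq> W \<and> W \<subseteq> V. (-1::real) ^ card W) = 0"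
    using card_subsupersets_even_odd[OF assms(1) \<open>U \<subset> V\<close>]
    by (intro sum_alternating_cancels finite_subset_interval) (simp_all add: conj_commute conj_left_commute)
  then show ?thesis using False by simp
qed

definition upper_mobius :: "'a set \<Rightarrow> ('a set \<Rightarrow> real) \<Rightarrow> 'a set \<Rightarrow> real" where
  "upper_mobius F A W = (-1) ^ card W * (\<Sum>V | W \<subseteq> V \<and> V \<subseteq> F. (-1) ^ card V * A V)"

lemma sum_upper_mobius:
  assumes "finite F" "U \<subseteq> F"
  shows "(\<Sum>W | U \<subseteq> W \<and> W \<subseteq> F. upper_mobius F A W) = A U"
proof -
  have "(\<Sum>W | U \<subseteq> W \<and> W \<subseteq> F. upper_mobius F A W)
     = (\<Sum>W | U \<subseteq> W \<and> W \<subseteq> F. \<Sum>V | V \<in> {V. U \<subseteq> V \<and> V \<subseteq> F} \<and> W \<subseteq> V. (-1) ^ card W * ((-1) ^ card V * A V))"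
    unfolding upper_mobius_def sum_distrib_left by (intro sum.cong refl arg_cong2[where f = sum]) auto
  also have "\<dots> = (\<Sum>V | U \<subseteq> V \<and> V \<subseteq> F. \<Sum>W | W \<in> {W. U \<subseteq> W \<and> W \<subseteq> F} \<and> W \<subseteq> V. (-1) ^ card W * ((-1) ^ card V * A V))"
    using assms(1) by (intro sum.swap_restrict finite_subset_interval)
  also have "\<dots> = (\<Sum>V | U \<subseteq> V \<and> V \<subseteq> F. (\<Sum>W | U \<subseteq> W \<and> W \<subseteq> V. (-1::real) ^ card W) * ((-1) ^ card V * A V))"
    unfolding sum_distrib_right by (intro sum.cong refl arg_cong2[where f = sum]) auto
  also have "\<dots> = (\<Sum>V | U \<subseteq> V \<and> V \<subseteq> F. if V = U then A U else 0)"
    using finite_subset[OF _ assms(1)]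
    by (intro sum.cong refl) (auto simp: sum_alternating_supersets simp flip: power_add mult.assoc)
  also have "\<dots> = A U"
    using assms by (simp add: finite_subset_interval)
  finally show ?thesis .
qed

lemma upper_mobius_eq_0:
  assumes "finite F" "card W > c" "\<And>V. V \<subseteq> F \<Longrightarrow> card V > c \<Longrightarrow> A V = 0"
  shows "upper_mobius F A W = 0"
proof -
  have "A V = 0" if "W \<subseteq> V" "V \<subseteq> F" for V
    using that assms card_mono[OF finite_subset] by (meson order.strict_trans2)
  then show ?thesis unfolding upper_mobius_def by simp
qed

definition ksubsets :: "'a set \<Rightarrow> nat \<Rightarrow> 'a set set" where
  "ksubsets F k = {U. U \<subseteq> F \<and> card U = k}"

lemma finite_ksubsets: "finite F \<Longrightarrow> finite (ksubsets F k)"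
  unfolding ksubsets_def by (rule finite_subset[of _ "Pow F"]) auto

lemma ksubsets_eq_empty_iff: "finite F \<Longrightarrow> ksubsets F k = {} \<longleftrightarrow> card F < k"
  unfolding ksubsets_def
  by (metis (mono_tags, lifting) card_mono empty_Collect_eq linorder_not_le obtain_subset_with_card_n)

lemma alternating_sum_Union_ksubsets:
  assumes "finite F"
  shows "alternating_sum (\<lambda>V. A (\<Union>V)) (ksubsets F k)
       = (\<Sum>W\<in>Pow F. if card W < k then upper_mobius F A W else 0)"
proof -
  have "alternating_sum (\<lambda>V. A (\<Union>V)) (ksubsets F k)
      = (\<Sum>V\<in>Pow (ksubsets F k). \<Sum>W | W \<in> Pow F \<and> \<Union>V \<subseteq> W. (-1) ^ card V * upper_mobius F A W)"
    unfolding alternating_sum_def sum_distrib_left[symmetric]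
  proof (intro sum.cong refl arg_cong2[where f = "(*)"])
    fix V assume "V \<in> Pow (ksubsets F k)"
    then have "\<Union>V \<subseteq> F" unfolding ksubsets_def by auto
    then show "A (\<Union>V) = (\<Sum>W | W \<in> Pow F \<and> \<Union>V \<subseteq> W. upper_mobius F A W)"
      using sum_upper_mobius[OF assms, of "\<Union>V" A] by (simp add: conj_commute)
  qed
  also have "\<dots> = (\<Sum>W\<in>Pow F. \<Sum>V | V \<in> Pow (ksubsets F k) \<and> \<Union>V \<subseteq> W. (-1) ^ card V * upper_mobius F A W)"
    using assms by (intro sum.swap_restrict) (simp_all add: finite_ksubsets)
  also have "\<dots> = (\<Sum>W\<in>Pow F. alternating_sum (\<lambda>_. 1) (ksubsets W k) * upper_mobius F A W)"
  proof (intro sum.cong refl)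
    fix W assume "W \<in> Pow F"
    then have "{V. V \<in> Pow (ksubsets F k) \<and> \<Union>V \<subseteq> W} = Pow (ksubsets W k)"
      unfolding ksubsets_def by auto
    then show "(\<Sum>V | V \<in> Pow (ksubsets F k) \<and> \<Union>V \<subseteq> W. (-1) ^ card V * upper_mobius F A W)
        = alternating_sum (\<lambda>_. 1) (ksubsets W k) * upper_mobius F A W"
      by (simp add: alternating_sum_def sum_distrib_right)
  qed
  also have "\<dots> = (\<Sum>W\<in>Pow F. if card W < k then upper_mobius F A W else 0)"
    using finite_subset[OF _ assms]
    by (intro sum.cong refl) (simp add: alternating_sum_const finite_ksubsets ksubsets_eq_empty_iff)
  finally show ?thesis .
qed

lemma sum_alternating_sum_Union_ksubsets:
  assumes "finite F" and vanish: "\<And>V. V \<subseteq> F \<Longrightarrow> card V > c \<Longrightarrow> A V = 0"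
  shows "(\<Sum>k=1..c. alternating_sum (\<lambda>V. A (\<Union>V)) (ksubsets F k)) = real c * A {} - (\<Sum>p\<in>F. A {p})"
proof -
  let ?\<mu> = "upper_mobius F A"
  have count: "(\<Sum>k=1..c. if n < k then 1 else 0 :: real) = real (c - n)" for n
    by (induction c) (auto simp: Suc_diff_le)
  have "(\<Sum>k=1..c. alternating_sum (\<lambda>V. A (\<Union>V)) (ksubsets F k))
      = (\<Sum>W\<in>Pow F. ?\<mu> W * (\<Sum>k=1..c. if card W < k then 1 else 0))"
    unfolding alternating_sum_Union_ksubsets[OF assms(1)] sum_distrib_left
    by (subst sum.swap) (simp add: if_distrib cong: if_cong)
  also have "\<dots> = (\<Sum>W\<in>Pow F. ?\<mu> W * (real c - real (card W)))"
  proof (intro sum.cong refl)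
    fix W
    show "?\<mu> W * (\<Sum>k=1..c. if card W < k then 1 else 0) = ?\<mu> W * (real c - real (card W))"
    proof (cases "card W \<le> c")
      case True
      then show ?thesis unfolding count by simp
    next
      case False
      then have "?\<mu> W = 0"
        by (intro upper_mobius_eq_0[OF assms(1), of c]) (simp_all add: vanish)
      then show ?thesis by simp
    qed
  qed
  also have "\<dots> = real c * (\<Sum>W\<in>Pow F. ?\<mu> W) - (\<Sum>W\<in>Pow F. \<Sum>p\<in>W. ?\<mu> W)"
    by (simp add: algebra_simps sum_distrib_left sum_subtractf)
  also have "(\<Sum>W\<in>Pow F. \<Sum>p\<in>W. ?\<mu> W) = (\<Sum>W\<in>Pow F. \<Sum>p | p \<in> F \<and> p \<in> W. ?\<mu> W)"
    by (intro sum.cong refl arg_cong2[where f = sum]) auto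
  also have "\<dots> = (\<Sum>p\<in>F. \<Sum>W | W \<in> Pow F \<and> p \<in> W. ?\<mu> W)"
    using assms(1) by (intro sum.swap_restrict) auto
  also have "\<dots> = (\<Sum>p\<in>F. \<Sum>W | {p} \<subseteq> W \<and> W \<subseteq> F. ?\<mu> W)"
    by (intro sum.cong refl arg_cong2[where f = sum]) auto
  also have "\<dots> = (\<Sum>p\<in>F. A {p})"
    by (intro sum.cong refl sum_upper_mobius[OF assms(1)]) simp
  also have "(\<Sum>W\<in>Pow F. ?\<mu> W) = A {}"
    using sum_upper_mobius[OF assms(1), of "{}" A] by (simp add: Pow_def)
  finally show ?thesis .
qed

lemma rideal_self: "p \<in> rideal p"
  unfolding rideal_def by (metis mult_1_right rangeI)

lemma rideal_one: "rideal 1 = UNIV"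
  unfolding rideal_def by simp

lemma join_choice_nonempty:
  assumes "join_choice J" "finite U" "U \<noteq> {}"
  shows "case J U of None \<Rightarrow> (\<Inter>p\<in>U. rideal p) = {} | Some r \<Rightarrow> (\<Inter>p\<in>U. rideal p) = rideal r"
  using assms unfolding join_choice_def by blast

lemma join_choice_Some:
  assumes "join_choice J" "finite U" "J U = Some r"
  shows "(\<Inter>p\<in>U. rideal p) = rideal r"
proof (cases "U = {}")
  case True
  then show ?thesis using assms(1,3) unfolding join_choice_def by (simp add: rideal_one)
next
  case False
  then show ?thesis using join_choice_nonempty[OF assms(1,2)] assms(3) by simp
qed

lemma join_choice_None_iff:
  assumes "join_choice J" "finite U"
  shows "J U = None \<longleftrightarrow> (\<Inter>p\<in>U. rideal p) = {}"
proof (cases "J U")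
  case None
  moreover have "U \<noteq> {}"
    using None assms(1) unfolding join_choice_def by auto
  ultimately show ?thesis using join_choice_nonempty[OF assms] by simp
next
  case (Some r)
  with join_choice_Some[OF assms] rideal_self show ?thesis by auto
qed

lemma card_le_cF:
  assumes "finite F" "V \<subseteq> F" "J V \<noteq> None"
  shows "card V \<le> cF J F"
  unfolding cF_def
proof (rule Max_ge)
  have "{card U |U. U \<subseteq> F \<and> J U \<noteq> None} \<subseteq> card ` Pow F" by auto
  then show "finite {card U |U. U \<subseteq> F \<and> J U \<noteq> None}"
    using assms(1) by (simp add: finite_subset)
qed (use assms(2,3) in blast)

lemma adjoint_family_mult:
  assumes "contractive_rep T" "adjoint_family T Ta"
  shows "Ta (p * q) y = Ta q (Ta p y)"
proof (rule vector_eq_ldot[THEN iffD1], rule allI)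
  fix x
  have "inner x (Ta (p * q) y) = inner (T p (T q x)) y"
    using assms unfolding adjoint_family_def contractive_rep_def by (metis blinfun_apply_blinfun_compose)
  also have "\<dots> = inner x (Ta q (Ta p y))"
    using assms(2) unfolding adjoint_family_def by simp
  finally show "inner x (Ta (p * q) y) = inner x (Ta q (Ta p y))" .
qed

lemma adjoint_family_one:
  assumes "contractive_rep T" "adjoint_family T Ta"
  shows "Ta 1 y = y"
  using assms unfolding adjoint_family_def contractive_rep_def
  by (intro vector_eq_ldot[THEN iffD1]) (metis id_blinfun.rep_eq)

lemma norm_adjoint_family_le:
  assumes "contractive_rep T" "adjoint_family T Ta"
  shows "norm (Ta p y) \<le> norm y"
proof -
  have "(norm (Ta p y))\<^sup>2 = inner (T p (Ta p y)) y"
    using assms(2) unfolding adjoint_family_def by (simp add: power2_norm_eq_inner)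
  also have "\<dots> \<le> norm (T p) * norm (Ta p y) * norm y"
    by (meson norm_blinfun norm_cauchy_schwarz norm_ge_zero mult_right_mono order_trans)
  also have "\<dots> \<le> norm (Ta p y) * norm y"
    using assms(1) unfolding contractive_rep_def by (simp add: mult_left_le_one_le mult.assoc)
  finally have "norm (Ta p y) * norm (Ta p y) \<le> norm (Ta p y) * norm y"
    by (simp add: power2_eq_square)
  then show ?thesis
    using mult_le_cancel_left_pos[of "norm (Ta p y)"] by (cases "Ta p y = 0") auto
qed

lemma norm_adjoint_family_rideal_eq:
  assumes "contractive_rep T" "adjoint_family T Ta" "rideal p = rideal q"
  shows "norm (Ta p y) = norm (Ta q y)"
proof -
  have mono: "norm (Ta a y) \<le> norm (Ta b y)" if ab: "a \<in> rideal b" for a b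
  proof -
    obtain x where "a = b * x"
      using ab unfolding rideal_def by blast
    then show ?thesis
      using adjoint_family_mult[OF assms(1,2)] norm_adjoint_family_le[OF assms(1,2)] by simp
  qed
  have "p \<in> rideal q" "q \<in> rideal p"
    using rideal_self assms(3) by auto
  then show ?thesis
    by (intro order_antisym mono)
qed

lemma norm_Tjoin_adjoint:
  assumes "join_choice J" "contractive_rep T" "adjoint_family T Ta" "finite U"
    and "(\<Inter>p\<in>U. rideal p) = rideal r"
  shows "norm (Tjoin J Ta U y) = norm (Ta r y)"
proof -
  have "J U \<noteq> None"
    using join_choice_None_iff[OF assms(1,4)] assms(5) rideal_self by auto
  then obtain r' where r': "J U = Some r'"
    by blast
  then have "rideal r' = rideal r"
    using join_choice_Some[OF assms(1,4)] assms(5) by simp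
  then have "norm (Ta r' y) = norm (Ta r y)"
    by (rule norm_adjoint_family_rideal_eq[OF assms(2,3)])
  then show ?thesis
    using r' unfolding Tjoin_def by simp
qed

lemma norm_Tjoin_adjoint_cong:
  assumes "join_choice J" "contractive_rep T" "adjoint_family T Ta" "finite U" "finite V"
    and "(\<Inter>p\<in>U. rideal p) = (\<Inter>p\<in>V. rideal p)"
  shows "norm (Tjoin J Ta U y) = norm (Tjoin J Ta V y)"
proof (cases "J U")
  case None
  then have "J V = None"
    using join_choice_None_iff[OF assms(1)] assms(4-6) by simp
  with None show ?thesis unfolding Tjoin_def by simp
next
  case (Some r)
  then have "(\<Inter>p\<in>U. rideal p) = rideal r" "(\<Inter>p\<in>V. rideal p) = rideal r"
    using join_choice_Some[OF assms(1,4)] assms(6) by simp_all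
  then show ?thesis
    using norm_Tjoin_adjoint[OF assms(1-3) assms(4)] norm_Tjoin_adjoint[OF assms(1-3) assms(5)] by simp
qed

lemma inner_Zop:
  assumes "adjoint_family T Ta"
  shows "inner (Zop J T Ta G y) y = alternating_sum (\<lambda>U. (norm (Tjoin J Ta U y))\<^sup>2) G"
  unfolding Zop_def alternating_sum_def inner_sum_left inner_scaleR_left
  using assms unfolding adjoint_family_def
  by (intro sum.cong refl) (simp add: Tjoin_def power2_norm_eq_inner split: option.split)

lemma join_choice_Union_None:
  assumes "join_choice J" "finite (\<Union>S)" "U \<in> S" "finite U" "J U = None"
  shows "J (\<Union>S) = None"
proof -
  have "(\<Inter>p\<in>U. rideal p) = {}"
    using join_choice_None_iff[OF assms(1,4)] assms(5) by simp
  then have "(\<Inter>p\<in>\<Union>S. rideal p) = {}"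
    using assms(3) by blast
  then show ?thesis
    using join_choice_None_iff[OF assms(1,2)] by simp
qed

lemma norm_Tjoin_adjoint_Union:
  assumes "join_choice J" "contractive_rep T" "adjoint_family T Ta" "finite S"
    and "\<And>U. U \<in> S \<Longrightarrow> finite U \<and> J U = Some (j U)"
  shows "norm (Tjoin J Ta (\<Union>S) y) = norm (Tjoin J Ta (j ` S) y)"
proof (rule norm_Tjoin_adjoint_cong[OF assms(1-3)])
  have "(\<Inter>p\<in>\<Union>S. rideal p) = (\<Inter>U\<in>S. \<Inter>p\<in>U. rideal p)"
    by blast
  also have "\<dots> = (\<Inter>U\<in>S. rideal (j U))"
  proof (rule INF_cong[OF refl])
    fix U assume "U \<in> S"
    then show "(\<Inter>p\<in>U. rideal p) = rideal (j U)"
      using join_choice_Some[OF assms(1)] assms(5) by blast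
  qed
  finally show "(\<Inter>p\<in>\<Union>S. rideal p) = (\<Inter>p\<in>j ` S. rideal p)"
    by simp
qed (use assms(4,5) in auto)

lemma alternating_sum_Union_nonneg:
  fixes T Ta :: "'p::monoid_mult \<Rightarrow> ('h::real_inner \<Rightarrow>\<^sub>L 'h)"
  assumes J: "join_choice J" and T: "contractive_rep T" "adjoint_family T Ta"
    and Z: "\<And>G. finite G \<Longrightarrow> positive_op (Zop J T Ta G)"
    and X: "finite X" "\<And>U. U \<in> X \<Longrightarrow> finite U"
  shows "alternating_sum (\<lambda>S. (norm (Tjoin J Ta (\<Union>S) y))\<^sup>2) X \<ge> 0"
proof -
  let ?A = "\<lambda>U. (norm (Tjoin J Ta U y))\<^sup>2"
  let ?X = "X \<inter> {U. J U \<noteq> None}"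
  define j where "j U = the (J U)" for U
  have fin_Union: "finite (\<Union>S)" if "S \<subseteq> X" for S
    using that X finite_subset by blast
  have "alternating_sum (\<lambda>S. ?A (\<Union>S)) X = alternating_sum (\<lambda>S. ?A (\<Union>S)) ?X"
  proof (rule alternating_sum_restrict[OF X(1)])
    fix S assume S: "S \<subseteq> X" "\<not> S \<subseteq> {U. J U \<noteq> None}"
    then obtain U where U: "U \<in> S" "J U = None"
      by blast
    then have "J (\<Union>S) = None"
      using join_choice_Union_None[OF J fin_Union[OF S(1)] U(1) X(2) U(2)] S(1) by blast
    then show "?A (\<Union>S) = 0"
      unfolding Tjoin_def by simp
  qed
  also have "\<dots> = alternating_sum (\<lambda>S. ?A (j ` S)) ?X"
    unfolding alternating_sum_def
  proof (intro sum.cong refl arg_cong2[where f = "(*)"])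
    fix S assume S: "S \<in> Pow ?X"
    then have "finite S"
      using finite_subset[OF _ X(1)] by blast
    moreover have "finite U \<and> J U = Some (j U)" if "U \<in> S" for U
      using S that X(2) unfolding j_def by auto
    ultimately have "norm (Tjoin J Ta (\<Union>S) y) = norm (Tjoin J Ta (j ` S) y)"
      by (rule norm_Tjoin_adjoint_Union[OF J T])
    then show "?A (\<Union>S) = ?A (j ` S)"
      by simp
  qed
  also have "\<dots> = alternating_sum ?A (j ` ?X)"
    using X(1) by (simp add: alternating_sum_image[where g = ?A and \<phi> = j])
  also have "\<dots> = inner (Zop J T Ta (j ` ?X) y) y"
    by (simp add: inner_Zop[OF T(2)])
  also have "\<dots> \<ge> 0"
    using Z[of "j ` ?X"] X(1) unfolding positive_op_def by simp
  finally show ?thesis .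
qed

theorem lemma4p1:
  fixes T Ta :: "'p::monoid_mult \<Rightarrow> ('h::{real_inner, complete_space} \<Rightarrow>\<^sub>L 'h)"
    and J :: "'p set \<Rightarrow> 'p option"
    and F :: "'p set" and h :: 'h
  assumes "right_LCM TYPE('p)"
    and "join_choice J"
    and "contractive_rep T"
    and "adjoint_family T Ta"
    and "\<And>G. finite G \<Longrightarrow> positive_op (Zop J T Ta G)"
    and "finite F"
  shows "(\<Sum>p\<in>F. (norm (Ta p h))\<^sup>2) \<le> real (cF J F) * (norm h)\<^sup>2"
proof -
  let ?A = "\<lambda>U. (norm (Tjoin J Ta U h))\<^sup>2"
  let ?c = "cF J F"
  have vanish: "?A V = 0" if "V \<subseteq> F" "card V > ?c" for V
  proof -
    have "J V = None"
      using card_le_cF[OF assms(6) that(1)] that(2) by fastforce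
    then show ?thesis unfolding Tjoin_def by simp
  qed
  have "(\<Sum>k=1..?c. alternating_sum (\<lambda>V. ?A (\<Union>V)) (ksubsets F k)) \<ge> 0"
  proof -
    have "finite U" if "U \<in> ksubsets F k" for k U
      using that finite_subset[OF _ assms(6)] unfolding ksubsets_def by blast
    then show ?thesis
      by (intro sum_nonneg alternating_sum_Union_nonneg[OF assms(2-5)]) (simp_all add: finite_ksubsets assms(6))
  qed
  then have "(\<Sum>p\<in>F. ?A {p}) \<le> real ?c * ?A {}"
    using sum_alternating_sum_Union_ksubsets[where A = ?A, OF assms(6) vanish] by simp
  moreover have "?A {p} = (norm (Ta p h))\<^sup>2" for p
    using norm_Tjoin_adjoint[OF assms(2-4), of "{p}" p] by simp
  moreover have "?A {} = (norm h)\<^sup>2"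
    using norm_Tjoin_adjoint[OF assms(2-4), of "{}" 1] by (simp add: rideal_one adjoint_family_one[OF assms(3,4)])
  ultimately show ?thesis by simp
qed

end
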